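(* Let $\mathcal{A}=\{\alpha_1<\alpha_2<\dots<\alpha_m\}\subset(0,1)$ with $|\mathcal{A}|=m$, and let $d_{\mathcal{A}}=\min_{\alpha\in\mathcal{A}}\min(\alpha,1-\alpha)$. Let $(b_t)_{t\ge1}$ be any sequence of base forecasts with $b_t\in\mathcal{K}$ and $(y_t)_{t\ge1}$ any sequence of real outcomes, and suppose there is $R>0$ with $|y_t-b_t^{\alpha}|\le R$ for all $\alpha\in\mathcal{A}$ and all $t$. Run MultiQT with learning rate $\eta>0$ and initial hidden offset $\tilde\theta_1\in\mathcal{K}$. Then for every $T\ge1$ and every $\alpha\in\mathcal{A}$, $$\Bigg|\frac{1}{T}\sum_{t=1}^T \mathrm{cov}_t^{\alpha}-\alpha\Bigg|\le \frac{2\|\tilde\theta_1\|_2}{\eta T}+\sqrt{\frac{|\mathcal{A}|}{T}+\frac{2R|\mathcal{A}|^{3/2}}{\eta\, d_{\mathcal{A}}\,T}}.$$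
   Context: $\mathcal{K}=\{x\in\mathbb{R}^m: x_1\le x_2\le\dots\le x_m\}$ (coordinates indexed by $\alpha_1,\dots,\alpha_m$), and for a closed convex set $C$, $\Pi_C(x)=\arg\min_{z\in C}\|x-z\|_2^2$ is Euclidean projection; $C-v=\{x-v:x\in C\}$. MultiQT (Multi-Level Quantile Tracker) with learning rate $\eta>0$ and initial hidden offset $\tilde\theta_1\in\mathcal{K}$: for $t=1,2,\dots$, (1) set the played offset $\theta_t=\Pi_{\mathcal{K}-b_t}(\tilde\theta_t)$; (2) output the forecast $q_t=b_t+\theta_t$ (equivalently $q_t=\Pi_{\mathcal{K}}(b_t+\tilde\theta_t)$); (3) after observing $y_t$, set $\mathrm{cov}_t^{\alpha}=\mathbb{1}\{y_t\le q_t^{\alpha}\}$ and update $\tilde\theta_{t+1}^{\alpha}=\tilde\theta_t^{\alpha}-\eta(\mathrm{cov}_t^{\alpha}-\alpha)$ for each $\alpha\in\mathcal{A}$. *)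

theory Defs
  imports "HOL-Analysis.Analysis"
begin

text \<open>Quantile levels are indexed by a finite linearly ordered type 'm (coordinate i
 corresponds to level alpha $ i); vectors in R^m are real ^ 'm with Euclidean norm.\<close>

definition isoK :: "(real ^ 'm::{finite,linorder}) set" where
  "isoK = {x. \<forall>i j. i \<le> j \<longrightarrow> x $ i \<le> x $ j}"

text \<open>Hidden offsets: multiqt_hidden ... s is tilde theta_(s+1); time t runs from 1.\<close>

fun multiqt_hidden ::
  "real \<Rightarrow> real ^ 'm::{finite,linorder} \<Rightarrow> real ^ 'm::{finite,linorder} \<Rightarrow> (nat \<Rightarrow> real ^ 'm::{finite,linorder}) \<Rightarrow> (nat \<Rightarrow> real) \<Rightarrow> nat \<Rightarrow> real ^ 'm::{finite,linorder}"
where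
  "multiqt_hidden eta alpha th1 b y 0 = th1"
| "multiqt_hidden eta alpha th1 b y (Suc s) =
     (let th = multiqt_hidden eta alpha th1 b y s;
          played = closest_point ((\<lambda>x. x - b (Suc s)) ` isoK) th;
          q = b (Suc s) + played
      in th - eta *\<^sub>R (\<chi> i. (if y (Suc s) \<le> q $ i then 1 else 0) - alpha $ i))"

definition multiqt_played ::
  "real \<Rightarrow> real ^ 'm::{finite,linorder} \<Rightarrow> real ^ 'm::{finite,linorder} \<Rightarrow> (nat \<Rightarrow> real ^ 'm::{finite,linorder}) \<Rightarrow> (nat \<Rightarrow> real) \<Rightarrow> nat \<Rightarrow> real ^ 'm::{finite,linorder}"
where
  "multiqt_played eta alpha th1 b y t =
     closest_point ((\<lambda>x. x - b t) ` isoK) (multiqt_hidden eta alpha th1 b y (t - 1))"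

definition multiqt_forecast ::
  "real \<Rightarrow> real ^ 'm::{finite,linorder} \<Rightarrow> real ^ 'm::{finite,linorder} \<Rightarrow> (nat \<Rightarrow> real ^ 'm::{finite,linorder}) \<Rightarrow> (nat \<Rightarrow> real) \<Rightarrow> nat \<Rightarrow> real ^ 'm::{finite,linorder}"
where
  "multiqt_forecast eta alpha th1 b y t = b t + multiqt_played eta alpha th1 b y t"

definition multiqt_cov ::
  "real \<Rightarrow> real ^ 'm::{finite,linorder} \<Rightarrow> real ^ 'm::{finite,linorder} \<Rightarrow> (nat \<Rightarrow> real ^ 'm::{finite,linorder}) \<Rightarrow> (nat \<Rightarrow> real) \<Rightarrow> nat \<Rightarrow> 'm::{finite,linorder} \<Rightarrow> real"
where
  "multiqt_cov eta alpha th1 b y t i =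
     (if y t \<le> multiqt_forecast eta alpha th1 b y t $ i then 1 else 0)"

end

theory Submission
  imports Defs
begin

(* MultiQT is lazily projected online gradient descent on the pinball losses: the hidden offset
   moves by -eta g_t, where g_t = cov_t - alpha is the pinball-loss gradient at the forecast q_t.
   Because the levels are strictly increasing, -g_t points into K at q_t (tied coordinates have
   equal coverage, and the larger level receives the larger decrement), so the variational
   inequality of the projection gives <theta~_t - theta_t, g_t> >= 0.  Together with
   (q_t - b_t)^alpha (cov_t^alpha - alpha) >= -R and |g_t|^2 <= m this yields
   |theta~_(t+1)|^2 <= |theta~_t|^2 + eta^2 m + 2 eta m R.  As theta~_(T+1) = theta~_1 - eta sum g_t,
   the coverage error at level alpha is (theta~_1 - theta~_(T+1))^alpha / (eta T), hence at most
   (2 |theta~_1| + sqrt (T (eta^2 m + 2 eta m R))) / (eta T).  This is sharper than the stated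
   bound since m <= m^(3/2) / d_A. *)

lemma closed_isoK: "closed isoK"
proof -
  have eq: "isoK = (\<Inter>i. \<Inter>j\<in>{j. i \<le> j}. {x. x $ i \<le> x $ j})"
    by (auto simp: isoK_def)
  show ?thesis
    unfolding eq by (auto intro!: closed_INT closed_Collect_le continuous_intros)
qed

lemma convex_isoK: "convex isoK"
  unfolding convex_def isoK_def by (auto intro!: add_mono mult_left_mono)

lemma zero_in_isoK: "0 \<in> isoK"
  by (simp add: isoK_def)

lemma isoK_feasible_direction:
  assumes q: "q \<in> isoK" and ties: "\<And>i j. i < j \<Longrightarrow> q $ i = q $ j \<Longrightarrow> g $ j \<le> g $ i"
  shows "\<exists>e>0. q - e *\<^sub>R g \<in> isoK"
proof -
  have pair: "\<forall>\<^sub>F e in at_right 0. i \<le> j \<longrightarrow> (q - e *\<^sub>R g) $ i \<le> (q - e *\<^sub>R g) $ j" for i j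
  proof (cases "i \<le> j \<and> q $ i = q $ j")
    case True
    then have "g $ j \<le> g $ i"
      using ties[of i j] by (cases "i = j") auto
    then have "e * g $ j \<le> e * g $ i" if "0 < e" for e :: real
      using that by (simp add: mult_left_mono)
    with True show ?thesis
      by (auto intro: eventually_mono[OF eventually_at_right_less])
  next
    case False
    then have gap: "i \<le> j \<Longrightarrow> 0 < q $ j - q $ i"
      using q by (auto simp: isoK_def order_le_neq_trans)
    have "((\<lambda>e. (q - e *\<^sub>R g) $ j - (q - e *\<^sub>R g) $ i) \<longlongrightarrow> q $ j - q $ i) (at_right 0)"
      by (auto intro!: tendsto_eq_intros)
    from order_tendstoD(1)[OF this gap]
    show ?thesis
      by (cases "i \<le> j") (auto elim: eventually_mono)
  qed
  have "\<forall>\<^sub>F e in at_right 0. \<forall>i j. i \<le> j \<longrightarrow> (q - e *\<^sub>R g) $ i \<le> (q - e *\<^sub>R g) $ j"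
    by (intro eventually_all_finite pair)
  then have "\<forall>\<^sub>F e in at_right 0. 0 < e \<and> q - e *\<^sub>R g \<in> isoK"
    using eventually_at_right_less[of "0::real"] by eventually_elim (simp add: isoK_def)
  then show ?thesis
    by (auto dest: eventually_happens)
qed

lemma closest_point_inner_feasible_direction:
  assumes "convex S" "closed S" "closest_point S a - e *\<^sub>R g \<in> S" "e > 0"
  shows "inner (a - closest_point S a) g \<ge> 0"
proof -
  have "inner (a - closest_point S a) (- (e *\<^sub>R g)) \<le> 0"
    using closest_point_dot[OF assms(1-3), where a=a] by simp
  with \<open>e > 0\<close> show ?thesis
    by (simp add: zero_le_mult_iff)
qed

lemma norm_diff_scaleR_square_le:
  fixes u p g :: "'a::real_inner"
  assumes "inner (u - p) g \<ge> 0" "inner p g \<ge> - A" "(norm g)\<^sup>2 \<le> B" "eta \<ge> 0"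
  shows "(norm (u - eta *\<^sub>R g))\<^sup>2 \<le> (norm u)\<^sup>2 + eta\<^sup>2 * B + 2 * eta * A"
proof -
  have "(norm (u - eta *\<^sub>R g))\<^sup>2 = (norm u)\<^sup>2 - 2 * eta * inner u g + eta\<^sup>2 * (norm g)\<^sup>2"
    unfolding power2_norm_eq_inner
    by (simp add: inner_diff_left inner_diff_right inner_commute power2_eq_square algebra_simps)
  moreover have "eta * inner u g \<ge> - (eta * A)"
    using assms(1,2,4) mult_left_mono[of "- A" "inner u g" eta] by (simp add: inner_diff_left)
  moreover have "eta\<^sup>2 * (norm g)\<^sup>2 \<le> eta\<^sup>2 * B"
    using assms(3) by (simp add: mult_left_mono)
  ultimately show ?thesis
    by linarith
qed

(* A subgradient in q of sum_i rho_(alpha_i) (y - q_i), with the pinball loss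
   rho_a u = u (a - [u < 0]). *)
definition quantile_grad :: "real ^ 'm \<Rightarrow> real \<Rightarrow> real ^ 'm \<Rightarrow> real ^ 'm" where
  "quantile_grad alpha y q = (\<chi> i. (if y \<le> q $ i then 1 else 0) - alpha $ i)"

lemma isoK_feasible_quantile_grad:
  assumes "\<And>j k. j < k \<Longrightarrow> alpha $ j < alpha $ k" "q \<in> isoK"
  shows "\<exists>e>0. q - e *\<^sub>R quantile_grad alpha y q \<in> isoK"
  using assms by (intro isoK_feasible_direction) (auto simp: quantile_grad_def less_imp_le)

lemma norm_quantile_grad_le:
  fixes alpha :: "real ^ 'm::finite"
  assumes "\<And>j. 0 \<le> alpha $ j \<and> alpha $ j \<le> 1"
  shows "(norm (quantile_grad alpha y q))\<^sup>2 \<le> real CARD('m)"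
proof -
  have coord: "(quantile_grad alpha y q $ i)\<^sup>2 \<le> 1" for i
    using assms[of i] by (simp add: abs_square_le_1 quantile_grad_def)
  have "(\<Sum>i\<in>UNIV. (quantile_grad alpha y q $ i)\<^sup>2) \<le> real CARD('m)"
    using sum_bounded_above[of UNIV "\<lambda>i. (quantile_grad alpha y q $ i)\<^sup>2" 1] coord by simp
  then show ?thesis
    unfolding power2_norm_eq_inner by (simp add: inner_vec_def power2_eq_square)
qed

lemma pinball_slope_offset_ge:
  fixes a y c q R :: real
  assumes "\<bar>y - c\<bar> \<le> R" "0 \<le> a" "a \<le> 1"
  shows "(q - c) * ((if y \<le> q then 1 else 0) - a) \<ge> - R"
proof -
  have R: "R \<ge> 0"
    using assms(1) by linarith
  have scaled: "x * s \<ge> - R" if "x \<ge> - R" "0 \<le> s" "s \<le> 1" for x s :: real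
  proof (cases "x \<ge> 0")
    case True
    with R that show ?thesis by (simp add: order_trans[OF _ mult_nonneg_nonneg])
  next
    case False
    then have "- (x * s) \<le> - x"
      using mult_left_le_one_le[of "- x" s] that by simp
    with that show ?thesis by linarith
  qed
  show ?thesis
  proof (cases "y \<le> q")
    case True
    with assms show ?thesis using scaled[of "q - c" "1 - a"] by simp
  next
    case False
    with assms show ?thesis using scaled[of "c - q" a] by (simp add: algebra_simps)
  qed
qed

lemma inner_quantile_grad_ge:
  fixes alpha c q :: "real ^ 'm::finite"
  assumes "\<And>j. \<bar>y - c $ j\<bar> \<le> R" "\<And>j. 0 \<le> alpha $ j \<and> alpha $ j \<le> 1"
  shows "inner (q - c) (quantile_grad alpha y q) \<ge> - (real CARD('m) * R)"
proof -
  have coord: "- R \<le> (q - c) $ i * quantile_grad alpha y q $ i" for i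
    using pinball_slope_offset_ge[of y "c $ i" R "alpha $ i" "q $ i"] assms[of i]
    by (simp add: quantile_grad_def)
  have "real CARD('m) * (- R) \<le> (\<Sum>i\<in>UNIV. (q - c) $ i * quantile_grad alpha y q $ i)"
    using sum_bounded_below[of "UNIV :: 'm set" "- R"] coord by simp
  then show ?thesis
    by (simp add: inner_vec_def)
qed

lemma multiqt_hidden_Suc:
  "multiqt_hidden eta alpha th1 b y (Suc s) = multiqt_hidden eta alpha th1 b y s
     - eta *\<^sub>R quantile_grad alpha (y (Suc s)) (multiqt_forecast eta alpha th1 b y (Suc s))"
  by (simp add: quantile_grad_def multiqt_forecast_def multiqt_played_def Let_def)

lemma multiqt_forecast_in_isoK: "multiqt_forecast eta alpha th1 b y t \<in> isoK"
proof -
  let ?S = "(\<lambda>x. x - b t) ` isoK"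
  have "closed ?S" "?S \<noteq> {}"
    using closed_translation_subtract[OF closed_isoK] zero_in_isoK by auto
  then have "multiqt_played eta alpha th1 b y t \<in> ?S"
    unfolding multiqt_played_def by (rule closest_point_in_set)
  then show ?thesis
    by (auto simp: multiqt_forecast_def)
qed

lemma multiqt_hidden_norm_square_Suc_le:
  fixes alpha :: "real ^ 'm::{finite,linorder}"
  assumes alpha_mono: "\<And>j k. j < k \<Longrightarrow> alpha $ j < alpha $ k"
    and alpha_range: "\<And>j. 0 \<le> alpha $ j \<and> alpha $ j \<le> 1"
    and R_bound: "\<And>j. \<bar>y (Suc s) - b (Suc s) $ j\<bar> \<le> R" and eta: "eta \<ge> 0"
  shows "(norm (multiqt_hidden eta alpha th1 b y (Suc s)))\<^sup>2
    \<le> (norm (multiqt_hidden eta alpha th1 b y s))\<^sup>2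
       + eta\<^sup>2 * real CARD('m) + 2 * eta * (real CARD('m) * R)"
proof -
  define S where "S = (\<lambda>x. x - b (Suc s)) ` isoK"
  define u where "u = multiqt_hidden eta alpha th1 b y s"
  define p where "p = multiqt_played eta alpha th1 b y (Suc s)"
  define g where "g = quantile_grad alpha (y (Suc s)) (b (Suc s) + p)"
  have p_closest: "p = closest_point S u"
    by (simp add: p_def multiqt_played_def S_def u_def)
  obtain e where "e > 0" and e_feasible: "b (Suc s) + p - e *\<^sub>R g \<in> isoK"
    using isoK_feasible_quantile_grad[OF alpha_mono multiqt_forecast_in_isoK]
    unfolding g_def p_def multiqt_forecast_def by blast
  have "convex S" "closed S"
    unfolding S_def
    by (intro convex_translation_subtract closed_translation_subtract convex_isoK closed_isoK)+
  moreover have "p - e *\<^sub>R g \<in> S"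
    unfolding S_def by (rule rev_image_eqI[OF e_feasible]) simp
  ultimately have "inner (u - p) g \<ge> 0"
    unfolding p_closest using \<open>e > 0\<close> by (rule closest_point_inner_feasible_direction)
  moreover have "inner p g \<ge> - (real CARD('m) * R)"
    using inner_quantile_grad_ge[OF R_bound alpha_range, of "b (Suc s) + p"] by (simp add: g_def)
  moreover have "(norm g)\<^sup>2 \<le> real CARD('m)"
    unfolding g_def using alpha_range by (rule norm_quantile_grad_le)
  ultimately have "(norm (u - eta *\<^sub>R g))\<^sup>2
      \<le> (norm u)\<^sup>2 + eta\<^sup>2 * real CARD('m) + 2 * eta * (real CARD('m) * R)"
    using eta by (rule norm_diff_scaleR_square_le)
  then show ?thesis
    by (simp add: multiqt_hidden_Suc u_def g_def p_def multiqt_forecast_def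
        del: multiqt_hidden.simps)
qed

lemma multiqt_hidden_norm_square_le:
  fixes alpha :: "real ^ 'm::{finite,linorder}"
  assumes "\<And>j k. j < k \<Longrightarrow> alpha $ j < alpha $ k"
    and "\<And>j. 0 \<le> alpha $ j \<and> alpha $ j \<le> 1"
    and "\<And>t j. t \<ge> 1 \<Longrightarrow> \<bar>y t - b t $ j\<bar> \<le> R" and "eta \<ge> 0"
  shows "(norm (multiqt_hidden eta alpha th1 b y n))\<^sup>2
    \<le> (norm th1)\<^sup>2 + real n * (eta\<^sup>2 * real CARD('m) + 2 * eta * (real CARD('m) * R))"
proof (induction n)
  case (Suc n)
  have "(norm (multiqt_hidden eta alpha th1 b y (Suc n)))\<^sup>2
    \<le> (norm (multiqt_hidden eta alpha th1 b y n))\<^sup>2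
       + eta\<^sup>2 * real CARD('m) + 2 * eta * (real CARD('m) * R)"
    by (rule multiqt_hidden_norm_square_Suc_le) (use assms in auto)
  with Suc.IH show ?case
    by (simp add: algebra_simps)
qed simp

lemma multiqt_hidden_norm_le:
  fixes alpha :: "real ^ 'm::{finite,linorder}"
  assumes "\<And>j k. j < k \<Longrightarrow> alpha $ j < alpha $ k"
    and "\<And>j. 0 \<le> alpha $ j \<and> alpha $ j \<le> 1"
    and "\<And>t j. t \<ge> 1 \<Longrightarrow> \<bar>y t - b t $ j\<bar> \<le> R" and "R \<ge> 0" and "eta \<ge> 0"
  shows "norm (multiqt_hidden eta alpha th1 b y n)
    \<le> norm th1 + sqrt (real n * (eta\<^sup>2 * real CARD('m) + 2 * eta * (real CARD('m) * R)))"
proof -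
  let ?K = "real n * (eta\<^sup>2 * real CARD('m) + 2 * eta * (real CARD('m) * R))"
  have "norm (multiqt_hidden eta alpha th1 b y n) \<le> sqrt ((norm th1)\<^sup>2 + ?K)"
    by (rule real_le_rsqrt) (rule multiqt_hidden_norm_square_le[OF assms(1-3,5)])
  also have "\<dots> \<le> sqrt ((norm th1)\<^sup>2) + sqrt ?K"
    using assms(4,5) by (intro sqrt_add_le_add_sqrt) auto
  finally show ?thesis
    by simp
qed

lemma multiqt_hidden_nth:
  "multiqt_hidden eta alpha th1 b y n $ i
     = th1 $ i - eta * (\<Sum>t = 1..n. multiqt_cov eta alpha th1 b y t i - alpha $ i)"
proof (induction n)
  case (Suc n)
  then show ?case
    by (simp add: multiqt_hidden_Suc quantile_grad_def multiqt_cov_def algebra_simps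
        del: multiqt_hidden.simps)
qed simp

lemma multiqt_coverage_gap:
  assumes "eta > 0" "T > 0"
  shows "(1 / real T) * (\<Sum>t = 1..T. multiqt_cov eta alpha th1 b y t i) - alpha $ i
    = (th1 $ i - multiqt_hidden eta alpha th1 b y T $ i) / (eta * real T)"
  using assms by (simp add: multiqt_hidden_nth sum_subtractf field_simps)

lemma sqrt_drift_div_le:
  fixes eta T m R d :: real
  assumes "eta > 0" "T > 0" "m \<ge> 1" "R \<ge> 0" "0 < d" "d \<le> 1"
  shows "sqrt (T * (eta\<^sup>2 * m + 2 * eta * (m * R))) / (eta * T)
    \<le> sqrt (m / T + 2 * R * m powr (3/2) / (eta * d * T))"
proof -
  have "m \<le> m powr (3/2)"
    using assms(3) powr_mono[of 1 "3/2" m] by simp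
  also have "\<dots> \<le> m powr (3/2) / d"
    using assms(5,6) by (simp add: le_divide_eq mult_left_le)
  finally have "2 * R * m / (eta * T) \<le> 2 * R * (m powr (3/2) / d) / (eta * T)"
    using assms by (intro divide_right_mono mult_left_mono) auto
  moreover have "sqrt (T * (eta\<^sup>2 * m + 2 * eta * (m * R))) / (eta * T)
      = sqrt (T * (eta\<^sup>2 * m + 2 * eta * (m * R)) / (eta * T)\<^sup>2)"
    using assms(1,2) by (simp add: real_sqrt_divide)
  moreover have "T * (eta\<^sup>2 * m + 2 * eta * (m * R)) / (eta * T)\<^sup>2 = m / T + 2 * R * m / (eta * T)"
    using assms(1,2) by (simp add: field_simps power2_eq_square)
  ultimately show ?thesis
    by (simp add: mult_ac)
qed

theorem theorem1:
  fixes alpha :: "real ^ 'm::{finite,linorder}"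
    and b :: "nat \<Rightarrow> real ^ 'm::{finite,linorder}" and y :: "nat \<Rightarrow> real"
    and eta R :: real and th1 :: "real ^ 'm::{finite,linorder}" and T :: nat and i :: "'m::{finite,linorder}"
  assumes alpha_mono: "\<And>j k. j < k \<Longrightarrow> alpha $ j < alpha $ k"
    and alpha_range: "\<And>j. 0 < alpha $ j \<and> alpha $ j < 1"
    and b_K: "\<And>t. t \<ge> 1 \<Longrightarrow> b t \<in> isoK"
    and R_pos: "R > 0"
    and R_bound: "\<And>t j. t \<ge> 1 \<Longrightarrow> \<bar>y t - b t $ j\<bar> \<le> R"
    and eta_pos: "eta > 0"
    and th1_K: "th1 \<in> isoK"
    and T_pos: "T \<ge> 1"
  shows "\<bar>(1 / real T) * (\<Sum>t = 1..T. multiqt_cov eta alpha th1 b y t i) - alpha $ i\<bar>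
     \<le> 2 * norm th1 / (eta * real T)
        + sqrt (real CARD('m) / real T
                + 2 * R * (real CARD('m) powr (3/2))
                  / (eta * (MIN j. min (alpha $ j) (1 - alpha $ j)) * real T))"
proof -
  define H where "H = multiqt_hidden eta alpha th1 b y T"
  define K where "K = real T * (eta\<^sup>2 * real CARD('m) + 2 * eta * (real CARD('m) * R))"
  define d where "d = (MIN j. min (alpha $ j) (1 - alpha $ j))"
  have alpha_unit: "\<And>j. 0 \<le> alpha $ j \<and> alpha $ j \<le> 1"
    using alpha_range less_imp_le by blast
  have d: "0 < d" "d \<le> 1"
    unfolding d_def using alpha_range by (auto simp: Min_gr_iff Min_le_iff)
  have "norm H \<le> norm th1 + sqrt K"
    unfolding H_def K_def using R_pos eta_pos
    by (intro multiqt_hidden_norm_le[OF alpha_mono alpha_unit R_bound]) auto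
  then have numerator: "\<bar>th1 $ i - H $ i\<bar> \<le> 2 * norm th1 + sqrt K"
    using component_le_norm_cart[of th1 i] component_le_norm_cart[of H i] by linarith
  have etaT: "eta * real T > 0"
    using eta_pos T_pos by simp
  have gap: "(1 / real T) * (\<Sum>t = 1..T. multiqt_cov eta alpha th1 b y t i) - alpha $ i
      = (th1 $ i - H $ i) / (eta * real T)"
    unfolding H_def using eta_pos T_pos by (intro multiqt_coverage_gap) auto
  have "\<bar>(1 / real T) * (\<Sum>t = 1..T. multiqt_cov eta alpha th1 b y t i) - alpha $ i\<bar>
      = \<bar>th1 $ i - H $ i\<bar> / (eta * real T)"
    unfolding gap using etaT by (simp add: abs_divide)
  also have "\<dots> \<le> 2 * norm th1 / (eta * real T) + sqrt K / (eta * real T)"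
    using numerator etaT by (simp add: divide_right_mono flip: add_divide_distrib)
  also have "sqrt K / (eta * real T)
      \<le> sqrt (real CARD('m) / real T + 2 * R * (real CARD('m) powr (3/2)) / (eta * d * real T))"
    unfolding K_def using eta_pos T_pos R_pos d by (intro sqrt_drift_div_le) auto
  finally show ?thesis
    unfolding d_def by simp
qed

end
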